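(* Let $[t_0,t_1]$ be an admissible segment of $\mathbf r$ with associated tetrahedron $\mathbf r_0\mathbf r_1\mathbf r_2\mathbf r_3$. For any $t^\star\in(t_0,t_1)$ let $\mathbf r_0\mathbf r_1^\star\mathbf r_2^\star\mathbf r_3^\star$ be the associated tetrahedron of the sub-segment $[t_0,t^\star]$. Then (a) $\mathbf r_1^\star$ and $\mathbf r_1$ lie on the same side of $\mathbf r_0$ on the tangent line $T^+(t_0)$; (b) $\mathbf r_2^\star$ and $\mathbf r_2$ lie on the same side of the line $T^+(t_0)$ within the osculating plane $O^+(t_0)$.
   Context: Setting: $\mathbf r(t)=(x(t),y(t),z(t))$ with $x,y,z$ rational functions with real coefficients whose denominators do not vanish on the parameter interval, properly parametrized, and not contained in a plane. Curvature $\kappa=\|\mathbf r'\times\mathbf r''\|/\|\mathbf r'\|^3$; torsion $\tau$ vanishes exactly where $\det(\mathbf r',\mathbf r'',\mathbf r''')=0$. Unit tangent $\boldsymbol\alpha=\mathbf r'/\|\mathbf r'\|$, unit binormal $\boldsymbol\gamma=\mathbf r'\times\mathbf r''/\|\mathbf r'\times\mathbf r''\|$; one-sided limits $\boldsymbol\alpha^{\pm}(s)=\lim_{t\to s^\pm}\boldsymbol\alpha(t)$, $\boldsymbol\gamma^{\pm}(s)=\lim_{t\to s^\pm}\boldsymbol\gamma(t)$; tangent lines $T^{\pm}(s)=\{\mathbf r(s)+\lambda\boldsymbol\alpha^{\pm}(s)\}$, osculating planes $O^{\pm}(s)=\{X:(X-\mathbf r(s))\cdot\boldsymbol\gamma^{\pm}(s)=0\}$.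 A point is singular if it corresponds to more than one parameter counted with multiplicity; character points are singular points, inflections ($\kappa=0$) and torsion-vanishing points ($\tau=0$). Associated tetrahedron of $[a,b]$: vertices $\mathbf r(a)$, $T^+(a)\cap L$, $T^-(b)\cap L$, $\mathbf r(b)$ where $L=O^+(a)\cap O^-(b)$. Admissible segment: $t_0<t_1$, no parameter in $(t_0,t_1]$ gives a character point, and for all $t_0\le s_1<s_2\le t_1$: (I) $\boldsymbol\alpha^+(s_1)\cdot\boldsymbol\gamma^-(s_2)\ne0$ and $\boldsymbol\alpha^-(s_2)\cdot\boldsymbol\gamma^+(s_1)\ne0$; (II) $(\boldsymbol\alpha^+(s_1)\times(\mathbf r(s_2)-\mathbf r(s_1)))\cdot\boldsymbol\alpha^-(s_2)\ne0$; (III) $(\mathbf r(s_1)-\mathbf r(s_2))\cdot\boldsymbol\gamma^-(s_2)\ne0$ and $(\mathbf r(s_2)-\mathbf r(s_1))\cdot\boldsymbol\gamma^+(s_1)\ne0$; and (IV) for all $t_0\le s_1<s_2<s_3\le t_1$, $\det(\boldsymbol\alpha(s_1),\boldsymbol\alpha(s_2),\boldsymbol\alpha(s_3))\ne0$ (one-sided limits used at $t_0,t_1$). *)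

theory Defs
  imports "HOL-Analysis.Analysis" "HOL-Computational_Algebra.Polynomial"
begin

definition rc :: "(3 \<Rightarrow> real poly) \<Rightarrow> (3 \<Rightarrow> real poly) \<Rightarrow> 3 \<Rightarrow> real \<Rightarrow> real" where
  "rc P Q i t = poly (P i) t / poly (Q i) t"

definition curve :: "(3 \<Rightarrow> real poly) \<Rightarrow> (3 \<Rightarrow> real poly) \<Rightarrow> real \<Rightarrow> real^3" where
  "curve P Q t = (\<chi> i. rc P Q i t)"

definition rder :: "(3 \<Rightarrow> real poly) \<Rightarrow> (3 \<Rightarrow> real poly) \<Rightarrow> nat \<Rightarrow> real \<Rightarrow> real^3" where
  "rder P Q k t = (\<chi> i. (deriv ^^ k) (rc P Q i) t)"

text \<open>Complex evaluation of the rational components (for algebraic notions).\<close>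
definition rcC :: "(3 \<Rightarrow> real poly) \<Rightarrow> (3 \<Rightarrow> real poly) \<Rightarrow> 3 \<Rightarrow> complex \<Rightarrow> complex" where
  "rcC P Q i z = poly (map_poly complex_of_real (P i)) z / poly (map_poly complex_of_real (Q i)) z"

definition defined_at_C :: "(3 \<Rightarrow> real poly) \<Rightarrow> complex \<Rightarrow> bool" where
  "defined_at_C Q z \<longleftrightarrow> (\<forall>i. poly (map_poly complex_of_real (Q i)) z \<noteq> 0)"

definition proper_param :: "(3 \<Rightarrow> real poly) \<Rightarrow> (3 \<Rightarrow> real poly) \<Rightarrow> bool" where
  "proper_param P Q \<longleftrightarrow>
     finite {z. defined_at_C Q z \<and>
                (\<exists>w. w \<noteq> z \<and> defined_at_C Q w \<and> (\<forall>i. rcC P Q i w = rcC P Q i z))}"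

definition nonplanar :: "(3 \<Rightarrow> real poly) \<Rightarrow> (3 \<Rightarrow> real poly) \<Rightarrow> bool" where
  "nonplanar P Q \<longleftrightarrow>
     \<not> (\<exists>n::real^3. \<exists>c. n \<noteq> 0 \<and>
           (\<forall>t. (\<forall>i. poly (Q i) t \<noteq> 0) \<longrightarrow> n \<bullet> curve P Q t = c))"

definition curvature :: "(3 \<Rightarrow> real poly) \<Rightarrow> (3 \<Rightarrow> real poly) \<Rightarrow> real \<Rightarrow> real" where
  "curvature P Q t = norm (cross3 (rder P Q 1 t) (rder P Q 2 t)) / norm (rder P Q 1 t) ^ 3"

text \<open>Torsion vanishes exactly where det(r',r'',r''') = 0.\<close>
definition torsion_zero :: "(3 \<Rightarrow> real poly) \<Rightarrow> (3 \<Rightarrow> real poly) \<Rightarrow> real \<Rightarrow> bool" where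
  "torsion_zero P Q t \<longleftrightarrow>
     det (vector [rder P Q 1 t, rder P Q 2 t, rder P Q 3 t] :: real^3^3) = 0"

text \<open>Singular point: the point r(t) corresponds to more than one parameter counted with
  multiplicity, i.e. another (complex) parameter gives the same point, or t is a
  multiple parameter (r'(t) = 0).\<close>
definition singular_param :: "(3 \<Rightarrow> real poly) \<Rightarrow> (3 \<Rightarrow> real poly) \<Rightarrow> real \<Rightarrow> bool" where
  "singular_param P Q t \<longleftrightarrow>
     (\<exists>w. w \<noteq> complex_of_real t \<and> defined_at_C Q w \<and>
          (\<forall>i. rcC P Q i w = complex_of_real (rc P Q i t)))
     \<or> rder P Q 1 t = 0"

definition character_param :: "(3 \<Rightarrow> real poly) \<Rightarrow> (3 \<Rightarrow> real poly) \<Rightarrow> real \<Rightarrow> bool" where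
  "character_param P Q t \<longleftrightarrow>
     singular_param P Q t \<or> curvature P Q t = 0 \<or> torsion_zero P Q t"

definition utan :: "(3 \<Rightarrow> real poly) \<Rightarrow> (3 \<Rightarrow> real poly) \<Rightarrow> real \<Rightarrow> real^3" where
  "utan P Q t = rder P Q 1 t /\<^sub>R norm (rder P Q 1 t)"

definition ubin :: "(3 \<Rightarrow> real poly) \<Rightarrow> (3 \<Rightarrow> real poly) \<Rightarrow> real \<Rightarrow> real^3" where
  "ubin P Q t = cross3 (rder P Q 1 t) (rder P Q 2 t) /\<^sub>R norm (cross3 (rder P Q 1 t) (rder P Q 2 t))"

definition utan_p :: "(3 \<Rightarrow> real poly) \<Rightarrow> (3 \<Rightarrow> real poly) \<Rightarrow> real \<Rightarrow> real^3" where
  "utan_p P Q s = Lim (at_right s) (utan P Q)"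
definition utan_m :: "(3 \<Rightarrow> real poly) \<Rightarrow> (3 \<Rightarrow> real poly) \<Rightarrow> real \<Rightarrow> real^3" where
  "utan_m P Q s = Lim (at_left s) (utan P Q)"
definition ubin_p :: "(3 \<Rightarrow> real poly) \<Rightarrow> (3 \<Rightarrow> real poly) \<Rightarrow> real \<Rightarrow> real^3" where
  "ubin_p P Q s = Lim (at_right s) (ubin P Q)"
definition ubin_m :: "(3 \<Rightarrow> real poly) \<Rightarrow> (3 \<Rightarrow> real poly) \<Rightarrow> real \<Rightarrow> real^3" where
  "ubin_m P Q s = Lim (at_left s) (ubin P Q)"

definition tline_p :: "(3 \<Rightarrow> real poly) \<Rightarrow> (3 \<Rightarrow> real poly) \<Rightarrow> real \<Rightarrow> (real^3) set" where
  "tline_p P Q s = {curve P Q s + l *\<^sub>R utan_p P Q s | l. True}"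
definition tline_m :: "(3 \<Rightarrow> real poly) \<Rightarrow> (3 \<Rightarrow> real poly) \<Rightarrow> real \<Rightarrow> (real^3) set" where
  "tline_m P Q s = {curve P Q s + l *\<^sub>R utan_m P Q s | l. True}"
definition oplane_p :: "(3 \<Rightarrow> real poly) \<Rightarrow> (3 \<Rightarrow> real poly) \<Rightarrow> real \<Rightarrow> (real^3) set" where
  "oplane_p P Q s = {X. (X - curve P Q s) \<bullet> ubin_p P Q s = 0}"
definition oplane_m :: "(3 \<Rightarrow> real poly) \<Rightarrow> (3 \<Rightarrow> real poly) \<Rightarrow> real \<Rightarrow> (real^3) set" where
  "oplane_m P Q s = {X. (X - curve P Q s) \<bullet> ubin_m P Q s = 0}"

text \<open>Associated tetrahedron of [a,b]: vertices r(a), T+(a) \<inter> L, T-(b) \<inter> L, r(b),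
  where L = O+(a) \<inter> O-(b).\<close>
definition tetL :: "(3 \<Rightarrow> real poly) \<Rightarrow> (3 \<Rightarrow> real poly) \<Rightarrow> real \<Rightarrow> real \<Rightarrow> (real^3) set" where
  "tetL P Q a b = oplane_p P Q a \<inter> oplane_m P Q b"
definition tet0 :: "(3 \<Rightarrow> real poly) \<Rightarrow> (3 \<Rightarrow> real poly) \<Rightarrow> real \<Rightarrow> real \<Rightarrow> real^3" where
  "tet0 P Q a b = curve P Q a"
definition tet1 :: "(3 \<Rightarrow> real poly) \<Rightarrow> (3 \<Rightarrow> real poly) \<Rightarrow> real \<Rightarrow> real \<Rightarrow> real^3" where
  "tet1 P Q a b = (THE X. X \<in> tline_p P Q a \<inter> tetL P Q a b)"
definition tet2 :: "(3 \<Rightarrow> real poly) \<Rightarrow> (3 \<Rightarrow> real poly) \<Rightarrow> real \<Rightarrow> real \<Rightarrow> real^3" where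
  "tet2 P Q a b = (THE X. X \<in> tline_m P Q b \<inter> tetL P Q a b)"
definition tet3 :: "(3 \<Rightarrow> real poly) \<Rightarrow> (3 \<Rightarrow> real poly) \<Rightarrow> real \<Rightarrow> real \<Rightarrow> real^3" where
  "tet3 P Q a b = curve P Q b"

definition admissible :: "(3 \<Rightarrow> real poly) \<Rightarrow> (3 \<Rightarrow> real poly) \<Rightarrow> real \<Rightarrow> real \<Rightarrow> bool" where
  "admissible P Q t0 t1 \<longleftrightarrow>
     t0 < t1 \<and>
     (\<forall>t\<in>{t0<..t1}. \<not> character_param P Q t) \<and>
     (\<forall>s1 s2. t0 \<le> s1 \<and> s1 < s2 \<and> s2 \<le> t1 \<longrightarrow>
        utan_p P Q s1 \<bullet> ubin_m P Q s2 \<noteq> 0 \<and>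
        utan_m P Q s2 \<bullet> ubin_p P Q s1 \<noteq> 0 \<and>
        cross3 (utan_p P Q s1) (curve P Q s2 - curve P Q s1) \<bullet> utan_m P Q s2 \<noteq> 0 \<and>
        (curve P Q s1 - curve P Q s2) \<bullet> ubin_m P Q s2 \<noteq> 0 \<and>
        (curve P Q s2 - curve P Q s1) \<bullet> ubin_p P Q s1 \<noteq> 0) \<and>
     (\<forall>s1 s2 s3. t0 \<le> s1 \<and> s1 < s2 \<and> s2 < s3 \<and> s3 \<le> t1 \<longrightarrow>
        det (vector [utan_p P Q s1, utan P Q s2, utan_m P Q s3] :: real^3^3) \<noteq> 0)"

end

theory Submission
  imports Defs
begin

(*
  Write r0 = r(t0), T = alpha+(t0), B = gamma+(t0).  For t0 < b <= t1 the curve is regular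
  at b, so the one-sided frames at b are the ordinary ones and, by admissibility (I),
  the vertices of the tetrahedron of [t0,b] are given by explicit formulas:
     r1(b) = r0 + tan_coord(b) T,          tan_coord continuous and nonzero by (III),
     r2(b) = r(b) + sec_coord(b) alpha(b), (r2(b) - r0) . (B x T) continuous and
                                           nonzero by (II).
  A continuous function without zeros keeps its sign on [ts,t1] (intermediate value
  theorem), so r1(ts), r1(t1), resp. r2(ts), r2(t1), lie strictly on the same side of
  the plane through r0 normal to T, resp. normal to B x T.  The first plane contains r0,
  the second the tangent line T+(t0), so the segments between them avoid these sets.

  The only analytic input is that T and B exist as limits and are orthogonal, although
  r(t0) may be a character point.  For this we develop germs of rational functions and
  show that a rational vector field, nonzero to the right of x0, has a limiting direction.
*)


section \<open>Germs of rational functions\<close>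

definition rational_germ :: "(real \<Rightarrow> real) \<Rightarrow> real \<Rightarrow> bool" where
  "rational_germ f x \<longleftrightarrow>
     (\<exists>p q. poly q x \<noteq> 0 \<and> eventually (\<lambda>y. f y = poly p y / poly q y) (nhds x))"

lemma rational_germI:
  assumes "poly q x \<noteq> 0" "eventually (\<lambda>y. f y = poly p y / poly q y) (nhds x)"
  shows "rational_germ f x"
  using assms unfolding rational_germ_def by blast

lemma isCont_nonzero_nhds:
  assumes "isCont g x" "g x \<noteq> (0::real)"
  shows "eventually (\<lambda>y. g y \<noteq> 0) (nhds x)"
proof -
  have "eventually (\<lambda>y. g y \<noteq> 0) (at x)"
    using assms tendsto_imp_eventually_ne by (auto simp: isCont_def)
  hence "eventually (\<lambda>y. y \<noteq> x \<longrightarrow> g y \<noteq> 0) (nhds x)"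
    by (simp add: eventually_at_filter)
  thus ?thesis by eventually_elim (use assms(2) in auto)
qed

lemma eventually_at_within_of_nhds:
  "eventually P (nhds x) \<Longrightarrow> eventually P (at x within s)"
  unfolding eventually_at_filter by (erule eventually_mono) simp

lemma rational_germ_const: "rational_germ (\<lambda>y. c) x"
  unfolding rational_germ_def by (intro exI[of _ "[:c:]"] exI[of _ 1]) auto

lemma rational_germ_add:
  assumes "rational_germ f x" "rational_germ g x"
  shows "rational_germ (\<lambda>y. f y + g y) x"
proof -
  obtain p q where q: "poly q x \<noteq> 0" and f: "eventually (\<lambda>y. f y = poly p y / poly q y) (nhds x)"
    using assms(1) unfolding rational_germ_def by blast
  obtain p' q' where q': "poly q' x \<noteq> 0" and g: "eventually (\<lambda>y. g y = poly p' y / poly q' y) (nhds x)"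
    using assms(2) unfolding rational_germ_def by blast
  have "eventually (\<lambda>y. poly (q * q') y \<noteq> 0) (nhds x)"
    using isCont_nonzero_nhds[where g="poly (q * q')"] q q' by simp
  hence "eventually (\<lambda>y. f y + g y = poly (p * q' + p' * q) y / poly (q * q') y) (nhds x)"
    using f g by eventually_elim (simp add: field_simps)
  thus ?thesis by (rule rational_germI[rotated]) (use q q' in simp)
qed

lemma rational_germ_mult:
  assumes "rational_germ f x" "rational_germ g x"
  shows "rational_germ (\<lambda>y. f y * g y) x"
proof -
  obtain p q where q: "poly q x \<noteq> 0" and f: "eventually (\<lambda>y. f y = poly p y / poly q y) (nhds x)"
    using assms(1) unfolding rational_germ_def by blast
  obtain p' q' where q': "poly q' x \<noteq> 0" and g: "eventually (\<lambda>y. g y = poly p' y / poly q' y) (nhds x)"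
    using assms(2) unfolding rational_germ_def by blast
  have "eventually (\<lambda>y. f y * g y = poly (p * p') y / poly (q * q') y) (nhds x)"
    using f g by eventually_elim simp
  thus ?thesis by (rule rational_germI[rotated]) (use q q' in simp)
qed

lemma rational_germ_diff:
  assumes "rational_germ f x" "rational_germ g x"
  shows "rational_germ (\<lambda>y. f y - g y) x"
  using rational_germ_add[OF assms(1) rational_germ_mult[OF rational_germ_const[of "-1"] assms(2)]]
  by simp

lemma rational_germ_isCont:
  assumes "rational_germ f x"
  shows "isCont f x"
proof -
  obtain p q where q: "poly q x \<noteq> 0" and f: "eventually (\<lambda>y. f y = poly p y / poly q y) (nhds x)"
    using assms unfolding rational_germ_def by blast
  have "isCont (\<lambda>y. poly p y / poly q y) x" using q by (intro continuous_intros) auto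
  thus ?thesis using isCont_cong[OF f] by simp
qed

lemma rational_germ_deriv:
  assumes "rational_germ f x"
  shows "rational_germ (deriv f) x"
proof -
  obtain p q where q: "poly q x \<noteq> 0" and f: "eventually (\<lambda>y. f y = poly p y / poly q y) (nhds x)"
    using assms unfolding rational_germ_def by blast
  have "eventually (\<lambda>y. poly q y \<noteq> 0) (nhds x)"
    using isCont_nonzero_nhds[where g="poly q"] q by simp
  moreover have "eventually (\<lambda>y. eventually (\<lambda>z. f z = poly p z / poly q z) (nhds y)) (nhds x)"
    using f by (simp add: eventually_eventually)
  ultimately have "eventually (\<lambda>y. deriv f y = poly (pderiv p * q - p * pderiv q) y / poly (q * q) y) (nhds x)"
  proof eventually_elim
    case (elim y)
    have "deriv f y = deriv (\<lambda>z. poly p z / poly q z) y" by (rule deriv_cong_ev[OF elim(2) refl])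
    also have "\<dots> = (poly (pderiv p) y * poly q y - poly p y * poly (pderiv q) y) / (poly q y * poly q y)"
      by (rule DERIV_imp_deriv, rule DERIV_divide) (use elim(1) in auto)
    finally show ?case by (simp add: algebra_simps)
  qed
  thus ?thesis by (rule rational_germI[rotated]) (use q in simp)
qed

lemma rational_germ_rder:
  assumes "\<forall>i. poly (Q i) x \<noteq> 0"
  shows "rational_germ (\<lambda>t. rder P Q k t $ i) x"
proof -
  have "rational_germ (rc P Q i) x"
    unfolding rational_germ_def rc_def using assms by (intro exI[of _ "P i"] exI[of _ "Q i"]) auto
  hence "rational_germ ((deriv ^^ k) (rc P Q i)) x"
    by (induction k) (auto intro: rational_germ_deriv)
  thus ?thesis unfolding rder_def by simp
qed

lemma rational_germ_curve:
  assumes "\<forall>i. poly (Q i) x \<noteq> 0"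
  shows "rational_germ (\<lambda>t. curve P Q t $ i) x"
  using rational_germ_rder[OF assms, of P 0] by (simp add: rder_def curve_def)

lemma rational_germ_cross3:
  fixes u v :: "real \<Rightarrow> real^3"
  assumes "\<And>i. rational_germ (\<lambda>t. u t $ i) x" "\<And>i. rational_germ (\<lambda>t. v t $ i) x"
  shows "rational_germ (\<lambda>t. cross3 (u t) (v t) $ i) x"
proof -
  have "i = 1 \<or> i = 2 \<or> i = 3" using exhaust_3 by blast
  thus ?thesis
    by (elim disjE) (simp_all add: cross_components rational_germ_diff rational_germ_mult assms)
qed

lemma rational_germ_vec_isCont:
  fixes f :: "real \<Rightarrow> real^'n"
  assumes "\<And>i. rational_germ (\<lambda>t. f t $ i) x"
  shows "isCont f x"
  using assms rational_germ_isCont unfolding isCont_def by (intro vec_tendstoI) auto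


section \<open>Limiting directions of rational vector fields\<close>

lemma common_root_power:
  fixes p :: "'i::finite \<Rightarrow> 'a::field poly"
  assumes "\<exists>i. p i \<noteq> 0"
  obtains k s j where "\<And>i. p i = [:-x0, 1:] ^ k * s i" and "poly (s j) x0 \<noteq> 0"
proof -
  define S where "S = {i. p i \<noteq> 0}"
  define k where "k = Min (order x0 ` p ` S)"
  obtain j where j: "j \<in> S" "order x0 (p j) = k"
    using Min_in[of "order x0 ` p ` S"] assms unfolding k_def S_def by fastforce
  have dvd: "[:-x0, 1:] ^ k dvd p i" for i
  proof (cases "i \<in> S")
    case True
    hence "k \<le> order x0 (p i)" unfolding k_def by (intro Min_le) auto
    thus ?thesis using le_imp_power_dvd order_1 dvd_trans by blast
  qed (auto simp: S_def)
  define s where "s i = p i div [:-x0, 1:] ^ k" for i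
  have ps: "p i = [:-x0, 1:] ^ k * s i" for i using dvd[of i] unfolding s_def by simp
  have "poly (s j) x0 \<noteq> 0"
  proof
    assume "poly (s j) x0 = 0"
    hence "[:-x0, 1:] ^ k * [:-x0, 1:] dvd [:-x0, 1:] ^ k * s j"
      by (intro mult_dvd_mono) (auto simp: poly_eq_0_iff_dvd)
    hence "[:-x0, 1:] ^ Suc (order x0 (p j)) dvd p j" using j(2) ps[of j] by (simp add: power_Suc2)
    thus False using order_2 j(1) S_def by blast
  qed
  thus thesis using that[OF ps] by blast
qed

lemma rational_vector_factor:
  fixes v :: "real \<Rightarrow> real^'n"
  assumes rat: "\<And>i. rational_germ (\<lambda>t. v t $ i) x0"
    and nz: "\<forall>\<^sub>F t in at_right x0. v t \<noteq> 0"
  obtains k w where "isCont w x0" "w x0 \<noteq> 0"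
    "\<forall>\<^sub>F y in nhds x0. v y = (y - x0) ^ k *\<^sub>R w y"
proof -
  have "\<forall>i. \<exists>p q. poly q x0 \<noteq> 0 \<and> (\<forall>\<^sub>F y in nhds x0. v y $ i = poly p y / poly q y)"
    using rat unfolding rational_germ_def by blast
  then obtain p q where q: "\<And>i. poly (q i) x0 \<noteq> 0"
    and pq: "\<And>i. \<forall>\<^sub>F y in nhds x0. v y $ i = poly (p i) y / poly (q i) y"
    by metis
  have pq_all: "\<forall>\<^sub>F y in nhds x0. \<forall>i. v y $ i = poly (p i) y / poly (q i) y"
    using pq by (intro eventually_all_finite) auto
  have "\<exists>i. p i \<noteq> 0"
  proof (rule ccontr)
    assume "\<not> (\<exists>i. p i \<noteq> 0)"
    hence "\<forall>i. p i = 0" by blast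
    have "\<forall>\<^sub>F y in nhds x0. v y = 0"
      using pq_all by eventually_elim (use \<open>\<forall>i. p i = 0\<close> in \<open>simp add: vec_eq_iff\<close>)
    hence "\<forall>\<^sub>F y in at_right x0. v y = 0"
      by (rule eventually_at_within_of_nhds)
    with nz have "\<forall>\<^sub>F y in at_right x0. False" by eventually_elim simp
    thus False by simp
  qed
  then obtain k s j where ps: "\<And>i. p i = [:-x0, 1:] ^ k * s i" and sj: "poly (s j) x0 \<noteq> 0"
    using common_root_power by blast
  define w where "w y = (\<chi> i. poly (s i) y / poly (q i) y)" for y
  have "rational_germ (\<lambda>t. w t $ i) x0" for i
    by (rule rational_germI[where p="s i", OF q[of i]]) (simp add: w_def)
  hence "isCont w x0" by (rule rational_germ_vec_isCont)
  moreover have "w x0 $ j \<noteq> 0" using sj q[of j] by (simp add: w_def)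
  hence "w x0 \<noteq> 0" by auto
  moreover have "\<forall>\<^sub>F y in nhds x0. v y = (y - x0) ^ k *\<^sub>R w y"
    using pq_all by eventually_elim (simp add: vec_eq_iff w_def ps)
  ultimately show thesis using that by blast
qed

lemma isCont_direction:
  fixes v :: "real \<Rightarrow> 'a::real_normed_vector"
  assumes "isCont v x" "v x \<noteq> 0"
  shows "isCont (\<lambda>t. v t /\<^sub>R norm (v t)) x"
  using assms unfolding isCont_def by (intro tendsto_intros) auto

lemma direction_scaleR_pos:
  fixes w :: "'a::real_normed_vector"
  assumes "0 < c"
  shows "(c *\<^sub>R w) /\<^sub>R norm (c *\<^sub>R w) = w /\<^sub>R norm w"
proof -
  have "(c *\<^sub>R w) /\<^sub>R norm (c *\<^sub>R w) = (inverse (c * norm w) * c) *\<^sub>R w"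
    using assms by simp
  also have "inverse (c * norm w) * c = inverse (norm w)"
    using assms by (simp add: inverse_mult_distrib)
  finally show ?thesis by simp
qed

lemma rational_direction_right_limit:
  fixes v :: "real \<Rightarrow> real^'n"
  assumes "\<And>i. rational_germ (\<lambda>t. v t $ i) x0"
    and "\<forall>\<^sub>F t in at_right x0. v t \<noteq> 0"
  shows "\<exists>L. ((\<lambda>t. v t /\<^sub>R norm (v t)) \<longlongrightarrow> L) (at_right x0)"
proof -
  obtain k w where w: "isCont w x0" "w x0 \<noteq> 0"
    and vw: "\<forall>\<^sub>F y in nhds x0. v y = (y - x0) ^ k *\<^sub>R w y"
    using rational_vector_factor[OF assms] by blast
  have "isCont (\<lambda>y. w y /\<^sub>R norm (w y)) x0" by (rule isCont_direction[OF w])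
  hence "((\<lambda>y. w y /\<^sub>R norm (w y)) \<longlongrightarrow> w x0 /\<^sub>R norm (w x0)) (at_right x0)"
    unfolding isCont_def by (rule tendsto_mono[OF at_le[OF subset_UNIV]])
  moreover have "\<forall>\<^sub>F y in at_right x0. w y /\<^sub>R norm (w y) = v y /\<^sub>R norm (v y)"
  proof -
    have "\<forall>\<^sub>F y in at_right x0. x0 < y" by (rule eventually_at_right_less)
    moreover have "\<forall>\<^sub>F y in at_right x0. v y = (y - x0) ^ k *\<^sub>R w y"
      using vw by (rule eventually_at_within_of_nhds)
    ultimately show ?thesis
    proof eventually_elim
      case (elim y)
      hence "0 < (y - x0) ^ k" by simp
      thus ?case by (simp only: elim(2) direction_scaleR_pos)
    qed
  qed
  ultimately have "((\<lambda>t. v t /\<^sub>R norm (v t)) \<longlongrightarrow> w x0 /\<^sub>R norm (w x0)) (at_right x0)"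
    by (rule Lim_transform_eventually)
  thus ?thesis by blast
qed


lemma continuous_nonzero_same_sign:
  fixes g :: "real \<Rightarrow> real"
  assumes "x \<le> y" "continuous_on {x..y} g" "\<forall>z\<in>{x..y}. g z \<noteq> 0"
  shows "0 < g x * g y"
proof (rule ccontr)
  assume "\<not> 0 < g x * g y"
  hence "g x \<le> 0 \<and> 0 \<le> g y \<or> g y \<le> 0 \<and> 0 \<le> g x"
    by (auto simp: zero_less_mult_iff)
  then obtain z where "x \<le> z" "z \<le> y" "g z = 0"
    using IVT'[of g x 0 y] IVT2'[of g y 0 x] assms(1,2) by blast
  thus False using assms(3) by auto
qed

lemma convex_combination_same_sign_nonzero:
  fixes A B u :: real
  assumes "0 < A * B" "0 \<le> u" "u \<le> 1"
  shows "(1 - u) * A + u * B \<noteq> 0"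
proof -
  have "A * ((1 - u) * A + u * B) = (1 - u) * A\<^sup>2 + u * (A * B)"
    by (simp add: algebra_simps power2_eq_square)
  moreover have "0 < (1 - u) * A\<^sup>2 + u * (A * B)"
  proof (cases "u = 1")
    case False
    hence "0 < (1 - u) * A\<^sup>2" using assms by (auto intro!: mult_pos_pos)
    thus ?thesis using assms by (simp add: add_pos_nonneg)
  qed (use assms in simp)
  ultimately show ?thesis by auto
qed

lemma closed_segment_avoids_hyperplane:
  fixes x y a N :: "'a::real_inner"
  assumes "0 < ((x - a) \<bullet> N) * ((y - a) \<bullet> N)"
  shows "closed_segment x y \<inter> {z. (z - a) \<bullet> N = 0} = {}"
proof -
  have "(z - a) \<bullet> N \<noteq> 0" if "z \<in> closed_segment x y" for z
  proof -
    obtain u where u: "0 \<le> u" "u \<le> 1" and z: "z = (1 - u) *\<^sub>R x + u *\<^sub>R y"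
      using \<open>z \<in> closed_segment x y\<close> unfolding in_segment by blast
    have "z - a = (1 - u) *\<^sub>R (x - a) + u *\<^sub>R (y - a)" using z by (simp add: algebra_simps)
    hence "(z - a) \<bullet> N = (1 - u) * ((x - a) \<bullet> N) + u * ((y - a) \<bullet> N)"
      by (simp add: inner_add_left)
    thus ?thesis using convex_combination_same_sign_nonzero[OF assms u] by simp
  qed
  thus ?thesis by auto
qed

lemma cross3_zero_in_plane:
  fixes T B Y :: "real^3"
  assumes "T \<bullet> B = 0" "Y \<bullet> B = 0" "Y \<bullet> cross3 B T = 0" "B \<noteq> 0"
  shows "cross3 T Y = 0"
proof -
  let ?c = "cross3 T Y"
  have "cross3 ?c B = 0"
    using Lagrange[of B T Y] cross_skew[of ?c B] assms(1,2) by (simp add: inner_commute)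
  moreover have "?c \<bullet> B = 0"
    using cross_triple[of T Y B] cross_triple[of Y B T] assms(3) by (simp add: inner_commute)
  ultimately show ?thesis using norm_and_cross_eq_0[of ?c B] assms(4) by blast
qed

lemma Lim_at_left_isCont:
  fixes f :: "real \<Rightarrow> 'b::t2_space"
  assumes "isCont f x"
  shows "Lim (at_left x) f = f x"
proof (rule tendsto_Lim[OF trivial_limit_at_left_real])
  show "(f \<longlongrightarrow> f x) (at_left x)"
    using assms unfolding isCont_def by (rule tendsto_mono[OF at_le[OF subset_UNIV]])
qed


section \<open>The frame along an admissible segment\<close>

locale admissible_segment =
  fixes P Q :: "3 \<Rightarrow> real poly" and t0 t1 :: real
  assumes denominators_nonzero: "\<And>t i. t0 \<le> t \<Longrightarrow> t \<le> t1 \<Longrightarrow> poly (Q i) t \<noteq> 0"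
    and admissible: "admissible P Q t0 t1"
begin

abbreviation "r0 \<equiv> curve P Q t0"
abbreviation "tan0 \<equiv> utan_p P Q t0"
abbreviation "bin0 \<equiv> ubin_p P Q t0"

lemma t0_less_t1: "t0 < t1"
  using admissible by (simp add: admissible_def)

lemma rational_rder: "t0 \<le> t \<Longrightarrow> t \<le> t1 \<Longrightarrow> rational_germ (\<lambda>s. rder P Q k s $ i) t"
  by (simp add: rational_germ_rder denominators_nonzero)

lemma rational_binormal_field:
  "t0 \<le> t \<Longrightarrow> t \<le> t1 \<Longrightarrow> rational_germ (\<lambda>s. cross3 (rder P Q 1 s) (rder P Q 2 s) $ i) t"
  by (intro rational_germ_cross3 rational_rder)

lemma curve_isCont: "t0 \<le> t \<Longrightarrow> t \<le> t1 \<Longrightarrow> isCont (curve P Q) t"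
  by (intro rational_germ_vec_isCont rational_germ_curve) (simp add: denominators_nonzero)

text \<open>Away from t0 there are no character points, so r' and r' x r'' do not vanish.\<close>
lemma regular:
  assumes "t0 < b" "b \<le> t1"
  shows "rder P Q 1 b \<noteq> 0" "cross3 (rder P Q 1 b) (rder P Q 2 b) \<noteq> 0"
proof -
  have "\<not> character_param P Q b" using admissible assms by (auto simp: admissible_def)
  thus "rder P Q 1 b \<noteq> 0" "cross3 (rder P Q 1 b) (rder P Q 2 b) \<noteq> 0"
    unfolding character_param_def singular_param_def curvature_def by auto
qed

lemma utan_isCont: "t0 < b \<Longrightarrow> b \<le> t1 \<Longrightarrow> isCont (utan P Q) b"
  unfolding utan_def[abs_def]
  by (intro isCont_direction rational_germ_vec_isCont rational_rder regular) auto

lemma ubin_isCont: "t0 < b \<Longrightarrow> b \<le> t1 \<Longrightarrow> isCont (ubin P Q) b"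
  unfolding ubin_def[abs_def]
  by (intro isCont_direction rational_germ_vec_isCont rational_binormal_field regular) auto

lemma utan_m_eq: "t0 < b \<Longrightarrow> b \<le> t1 \<Longrightarrow> utan_m P Q b = utan P Q b"
  unfolding utan_m_def using Lim_at_left_isCont utan_isCont by blast

lemma ubin_m_eq: "t0 < b \<Longrightarrow> b \<le> t1 \<Longrightarrow> ubin_m P Q b = ubin P Q b"
  unfolding ubin_m_def using Lim_at_left_isCont ubin_isCont by blast

lemma eventually_regular_right:
  "\<forall>\<^sub>F t in at_right t0. rder P Q 1 t \<noteq> 0 \<and> cross3 (rder P Q 1 t) (rder P Q 2 t) \<noteq> 0"
  using t0_less_t1 regular by (auto simp: eventually_at_right_field)

text \<open>The one-sided frame at t0 consists of genuine limits, even if r(t0) is a character point.\<close>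
lemma utan_right_limit: "(utan P Q \<longlongrightarrow> tan0) (at_right t0)"
proof -
  have "\<forall>\<^sub>F t in at_right t0. rder P Q 1 t \<noteq> 0"
    using eventually_regular_right by (rule eventually_mono) simp
  then obtain L where "((\<lambda>t. rder P Q 1 t /\<^sub>R norm (rder P Q 1 t)) \<longlongrightarrow> L) (at_right t0)"
    using rational_direction_right_limit rational_rder[OF order_refl less_imp_le[OF t0_less_t1]]
    by blast
  hence "(utan P Q \<longlongrightarrow> L) (at_right t0)" by (simp add: utan_def[abs_def])
  thus ?thesis unfolding utan_p_def using tendsto_Lim trivial_limit_at_right_real by metis
qed

lemma ubin_right_limit: "(ubin P Q \<longlongrightarrow> bin0) (at_right t0)"
proof -
  let ?n = "\<lambda>t. cross3 (rder P Q 1 t) (rder P Q 2 t)"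
  have "\<forall>\<^sub>F t in at_right t0. ?n t \<noteq> 0"
    using eventually_regular_right by (rule eventually_mono) simp
  then obtain L where "((\<lambda>t. ?n t /\<^sub>R norm (?n t)) \<longlongrightarrow> L) (at_right t0)"
    using rational_direction_right_limit[of ?n]
      rational_binormal_field[OF order_refl less_imp_le[OF t0_less_t1]]
    by blast
  hence "(ubin P Q \<longlongrightarrow> L) (at_right t0)" by (simp add: ubin_def[abs_def])
  thus ?thesis unfolding ubin_p_def using tendsto_Lim trivial_limit_at_right_real by metis
qed

lemma tan0_bin0_orthogonal: "tan0 \<bullet> bin0 = 0"
proof -
  have "((\<lambda>t. utan P Q t \<bullet> ubin P Q t) \<longlongrightarrow> tan0 \<bullet> bin0) (at_right t0)"
    using utan_right_limit ubin_right_limit by (intro tendsto_intros)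
  moreover have "utan P Q t \<bullet> ubin P Q t = 0" for t
    by (simp add: utan_def ubin_def dot_cross_self)
  ultimately have "((\<lambda>t. 0::real) \<longlongrightarrow> tan0 \<bullet> bin0) (at_right t0)" by simp
  from tendsto_unique[OF trivial_limit_at_right_real tendsto_const this] show ?thesis by simp
qed

lemma admissible_at:
  assumes "t0 < b" "b \<le> t1"
  shows "tan0 \<bullet> ubin P Q b \<noteq> 0" "utan P Q b \<bullet> bin0 \<noteq> 0"
    "cross3 tan0 (curve P Q b - r0) \<bullet> utan P Q b \<noteq> 0"
    "(r0 - curve P Q b) \<bullet> ubin P Q b \<noteq> 0" "(curve P Q b - r0) \<bullet> bin0 \<noteq> 0"
proof -
  have "t0 \<le> t0 \<and> t0 < b \<and> b \<le> t1" using assms by simp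
  with admissible have
    "tan0 \<bullet> ubin_m P Q b \<noteq> 0 \<and> utan_m P Q b \<bullet> bin0 \<noteq> 0 \<and>
     cross3 tan0 (curve P Q b - r0) \<bullet> utan_m P Q b \<noteq> 0 \<and>
     (r0 - curve P Q b) \<bullet> ubin_m P Q b \<noteq> 0 \<and> (curve P Q b - r0) \<bullet> bin0 \<noteq> 0"
    unfolding admissible_def by blast
  thus "tan0 \<bullet> ubin P Q b \<noteq> 0" "utan P Q b \<bullet> bin0 \<noteq> 0"
    "cross3 tan0 (curve P Q b - r0) \<bullet> utan P Q b \<noteq> 0"
    "(r0 - curve P Q b) \<bullet> ubin P Q b \<noteq> 0" "(curve P Q b - r0) \<bullet> bin0 \<noteq> 0"
    by (simp_all add: utan_m_eq[OF assms] ubin_m_eq[OF assms])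
qed

lemma tan0_nonzero: "tan0 \<noteq> 0"
  using admissible_at(1)[OF t0_less_t1 order_refl] by auto

lemma bin0_nonzero: "bin0 \<noteq> 0"
  using admissible_at(2)[OF t0_less_t1 order_refl] by auto


section \<open>The vertices of the associated tetrahedron\<close>

text \<open>Coordinates of r1 along T+(t0) and of r2 along T-(b), solved from the plane equations.\<close>
definition tan_coord :: "real \<Rightarrow> real" where
  "tan_coord b = ((curve P Q b - r0) \<bullet> ubin P Q b) / (tan0 \<bullet> ubin P Q b)"

definition sec_coord :: "real \<Rightarrow> real" where
  "sec_coord b = - ((curve P Q b - r0) \<bullet> bin0) / (utan P Q b \<bullet> bin0)"

lemma tet1_eq:
  assumes "t0 < b" "b \<le> t1"
  shows "tet1 P Q t0 b = r0 + tan_coord b *\<^sub>R tan0"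
  unfolding tet1_def
proof (rule the_equality)
  have nz: "tan0 \<bullet> ubin P Q b \<noteq> 0" using admissible_at(1)[OF assms] .
  have "X \<in> tline_p P Q t0 \<inter> tetL P Q t0 b \<longleftrightarrow> X = r0 + tan_coord b *\<^sub>R tan0" for X
  proof -
    have "(r0 + m *\<^sub>R tan0 - curve P Q b) \<bullet> ubin P Q b = 0 \<longleftrightarrow> m = tan_coord b" for m
      using nz tan0_bin0_orthogonal
      by (auto simp: tan_coord_def inner_diff_left inner_add_left field_simps)
    thus ?thesis
      unfolding tetL_def tline_p_def oplane_p_def oplane_m_def ubin_m_eq[OF assms]
      using tan0_bin0_orthogonal by auto
  qed
  thus "r0 + tan_coord b *\<^sub>R tan0 \<in> tline_p P Q t0 \<inter> tetL P Q t0 b"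
    "\<And>X. X \<in> tline_p P Q t0 \<inter> tetL P Q t0 b \<Longrightarrow> X = r0 + tan_coord b *\<^sub>R tan0"
    by blast+
qed

lemma tet2_eq:
  assumes "t0 < b" "b \<le> t1"
  shows "tet2 P Q t0 b = curve P Q b + sec_coord b *\<^sub>R utan P Q b"
  unfolding tet2_def
proof (rule the_equality)
  have nz: "utan P Q b \<bullet> bin0 \<noteq> 0" using admissible_at(2)[OF assms] .
  have orth: "utan P Q b \<bullet> ubin P Q b = 0" by (simp add: utan_def ubin_def dot_cross_self)
  have "X \<in> tline_m P Q b \<inter> tetL P Q t0 b \<longleftrightarrow> X = curve P Q b + sec_coord b *\<^sub>R utan P Q b" for X
  proof -
    have "(curve P Q b + m *\<^sub>R utan P Q b - r0) \<bullet> bin0 = 0 \<longleftrightarrow> m = sec_coord b" for m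
      using nz by (auto simp: sec_coord_def inner_diff_left inner_add_left field_simps)
    thus ?thesis
      unfolding tetL_def tline_m_def oplane_p_def oplane_m_def ubin_m_eq[OF assms] utan_m_eq[OF assms]
      using orth by auto
  qed
  thus "curve P Q b + sec_coord b *\<^sub>R utan P Q b \<in> tline_m P Q b \<inter> tetL P Q t0 b"
    "\<And>X. X \<in> tline_m P Q b \<inter> tetL P Q t0 b \<Longrightarrow> X = curve P Q b + sec_coord b *\<^sub>R utan P Q b"
    by blast+
qed

lemma tet1_in_tline: "t0 < b \<Longrightarrow> b \<le> t1 \<Longrightarrow> tet1 P Q t0 b \<in> tline_p P Q t0"
  by (auto simp: tet1_eq tline_p_def)

lemma tet2_in_oplane: "t0 < b \<Longrightarrow> b \<le> t1 \<Longrightarrow> tet2 P Q t0 b \<in> oplane_p P Q t0"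
  using admissible_at(2)
  by (simp add: tet2_eq oplane_p_def sec_coord_def inner_diff_left inner_add_left)


text \<open>Part (a): r1 never reaches r0, so it stays on one side of r0 along T+(t0).\<close>
lemma tet1_same_side:
  assumes "t0 < s" "s \<le> s'" "s' \<le> t1"
  shows "r0 \<notin> closed_segment (tet1 P Q t0 s) (tet1 P Q t0 s')"
proof -
  have nz: "tan_coord b \<noteq> 0" if "b \<in> {s..s'}" for b
    using admissible_at(1,4)[of b] that assms
    by (auto simp: tan_coord_def inner_diff_left)
  have "continuous_on {s..s'} tan_coord"
    using assms admissible_at(1) curve_isCont ubin_isCont unfolding tan_coord_def
    by (intro continuous_at_imp_continuous_on ballI continuous_intros) auto
  hence "0 < (tan_coord s * tan_coord s') * (tan0 \<bullet> tan0)\<^sup>2"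
    using continuous_nonzero_same_sign assms(2) nz tan0_nonzero by simp
  also have "\<dots> = ((tet1 P Q t0 s - r0) \<bullet> tan0) * ((tet1 P Q t0 s' - r0) \<bullet> tan0)"
    using assms by (simp add: tet1_eq power2_eq_square)
  finally have "0 < ((tet1 P Q t0 s - r0) \<bullet> tan0) * ((tet1 P Q t0 s' - r0) \<bullet> tan0)" .
  thus ?thesis using closed_segment_avoids_hyperplane by fastforce
qed

text \<open>Part (b): r2 never meets T+(t0) inside O+(t0), by condition (II).\<close>
lemma tet2_off_tline:
  assumes "t0 < b" "b \<le> t1"
  shows "(tet2 P Q t0 b - r0) \<bullet> cross3 bin0 tan0 \<noteq> 0"
proof
  define Y where "Y = tet2 P Q t0 b - r0"
  assume "(tet2 P Q t0 b - r0) \<bullet> cross3 bin0 tan0 = 0"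
  moreover have "Y \<bullet> bin0 = 0"
    using tet2_in_oplane[OF assms] by (simp add: Y_def oplane_p_def)
  ultimately have "cross3 tan0 Y = 0"
    using cross3_zero_in_plane tan0_bin0_orthogonal bin0_nonzero Y_def by blast
  moreover have "curve P Q b - r0 = Y - sec_coord b *\<^sub>R utan P Q b"
    by (simp add: Y_def tet2_eq[OF assms])
  ultimately have "cross3 tan0 (curve P Q b - r0) \<bullet> utan P Q b = 0"
    by (simp add: Cross3.right_diff_distrib cross_mult_right inner_diff_left dot_cross_self)
  thus False using admissible_at(3)[OF assms] by blast
qed

lemma tet2_same_side:
  assumes "t0 < s" "s \<le> s'" "s' \<le> t1"
  shows "closed_segment (tet2 P Q t0 s) (tet2 P Q t0 s') \<inter> tline_p P Q t0 = {}"
proof -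
  define g where "g b = (curve P Q b + sec_coord b *\<^sub>R utan P Q b - r0) \<bullet> cross3 bin0 tan0" for b
  have "continuous_on {s..s'} g"
    using assms admissible_at(2) curve_isCont utan_isCont unfolding g_def sec_coord_def
    by (intro continuous_at_imp_continuous_on ballI continuous_intros) auto
  moreover have "\<forall>b\<in>{s..s'}. g b \<noteq> 0"
    using tet2_off_tline tet2_eq assms unfolding g_def by auto
  ultimately have "0 < g s * g s'"
    using continuous_nonzero_same_sign assms(2) by blast
  hence "0 < ((tet2 P Q t0 s - r0) \<bullet> cross3 bin0 tan0) * ((tet2 P Q t0 s' - r0) \<bullet> cross3 bin0 tan0)"
    using assms by (simp add: g_def tet2_eq)
  moreover have "tline_p P Q t0 \<subseteq> {z. (z - r0) \<bullet> cross3 bin0 tan0 = 0}"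
    by (auto simp: tline_p_def dot_cross_self)
  ultimately show ?thesis using closed_segment_avoids_hyperplane by blast
qed

end


theorem lemma3:
  fixes P Q :: "3 \<Rightarrow> real poly" and I :: "real set" and t0 t1 ts :: real
  assumes "is_interval I"
    and "\<forall>t\<in>I. \<forall>i. poly (Q i) t \<noteq> 0"
    and "proper_param P Q"
    and "nonplanar P Q"
    and "{t0..t1} \<subseteq> I"
    and "admissible P Q t0 t1"
    and "t0 < ts" and "ts < t1"
  shows "(tet1 P Q t0 ts \<in> tline_p P Q t0 \<and> tet1 P Q t0 t1 \<in> tline_p P Q t0 \<and>
         tet0 P Q t0 t1 \<notin> closed_segment (tet1 P Q t0 ts) (tet1 P Q t0 t1)) \<and>
         (tet2 P Q t0 ts \<in> oplane_p P Q t0 \<and> tet2 P Q t0 t1 \<in> oplane_p P Q t0 \<and>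
         closed_segment (tet2 P Q t0 ts) (tet2 P Q t0 t1) \<inter> tline_p P Q t0 = {})"
proof -
  interpret admissible_segment P Q t0 t1
    using assms(2,5,6) by unfold_locales auto
  have ts: "t0 < ts" "ts \<le> t1" and t1: "t0 < t1" "t1 \<le> t1"
    using assms(7,8) by auto
  show ?thesis
    unfolding tet0_def
    using tet1_in_tline[OF ts] tet1_in_tline[OF t1] tet2_in_oplane[OF ts] tet2_in_oplane[OF t1]
      tet1_same_side[OF ts(1) ts(2) order_refl] tet2_same_side[OF ts(1) ts(2) order_refl]
    by blast
qed

end
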